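(* Let $y(t)$ solve $\dot y_k=v_k(Q(y))$, $k\in\mathcal{N}$, and let $x(t)=Q(y(t))$. If $p_k\in\mathcal{X}_k$ is dominated, or even iteratively dominated, then $p_k$ becomes extinct along $x(t)$, i.e. $\min\{x_{k\alpha}(t):\alpha\in\operatorname{supp}(p_k)\}\to0$ as $t\to\infty$.
   Context: Setting: a finite game with players $\mathcal{N}=\{1,\dots,N\}$, finite action sets $\mathcal{A}_k$, mixed strategies $\mathcal{X}_k=\Delta(\mathcal{A}_k)$, $\mathcal{X}=\prod_k\mathcal{X}_k$, multilinear expected payoffs $u_k$, payoff vectors $v_k(x)=(u_k(\alpha;x_{-k}))_{\alpha\in\mathcal{A}_k}$. Each player has a penalty function $h_k$ on $\mathcal{X}_k$ (continuous, $C^\infty$ on the relative interior of each face, strongly convex: $h(tx_1+(1-t)x_2)\le th(x_1)+(1-t)h(x_2)-\tfrac12Kt(1-t)\|x_1-x_2\|^2$ for some $K>0$), with choice map $Q_k(y_k)=\arg\max_{x_k\in\mathcal{X}_k}\{\langle y_k,x_k\rangle-h_k(x_k)\}$; $Q=(Q_k)_k$. $p_k$ is dominated by $p_k'$ if $u_k(p_k;x_{-k})<u_k(p_k';x_{-k})$ for all $x_{-k}\in\prod_{\ell\ne k}\mathcal{X}_\ell$. Iterated elimination: $\mathcal{A}_k^0=\mathcal{A}_k$; given $\mathcal{A}^r_\ell$, let $\mathcal{X}_\ell^r=\Delta(\mathcal{A}_\ell^r)$ and $\mathcal{A}_k^{r+1}$ be the actions in $\mathcal{A}_k^r$ not dominated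 (by some element of $\mathcal{X}_k^r$) against all $x_{-k}\in\prod_{\ell\ne k}\mathcal{X}_\ell^r$. $p_k$ is iteratively dominated if for some $r\ge0$, $p_k\in\mathcal{X}_k^r$ and there is $p_k'\in\mathcal{X}_k^r$ with $u_k(p_k';x_{-k})>u_k(p_k;x_{-k})$ for all $x_{-k}\in\prod_{\ell\ne k}\mathcal{X}_\ell^r$. *)

theory Defs
  imports "HOL-Analysis.Analysis"
begin

text \<open>Players form a finite type 'n; all actions live in one finite type 'a,
  player k's action set is a nonempty subset A k. A mixed strategy of player k is a
  vector in real^'a lying in the mixed_strats over A k (zero off A k). A pure payoff function
  u k s is given on pure profiles s (with s l in A l).\<close>

definition mixed_strats :: "'a::finite set \<Rightarrow> (real^'a) set" where
  "mixed_strats B = {x. (\<forall>\<alpha>. 0 \<le> x $ \<alpha>) \<and> (\<forall>\<alpha>. \<alpha> \<notin> B \<longrightarrow> x $ \<alpha> = 0)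
                 \<and> (\<Sum>\<alpha>\<in>UNIV. x $ \<alpha>) = 1}"

definition pure_strat :: "'a::finite \<Rightarrow> real^'a" where
  "pure_strat \<alpha> = (\<chi> \<beta>. if \<beta> = \<alpha> then 1 else 0)"

definition exp_payoff ::
  "('n::finite \<Rightarrow> 'a::finite set) \<Rightarrow> ('n \<Rightarrow> ('n \<Rightarrow> 'a) \<Rightarrow> real) \<Rightarrow> 'n \<Rightarrow> ('n \<Rightarrow> real^'a) \<Rightarrow> real" where
  "exp_payoff A u k x = (\<Sum>s\<in>PiE UNIV A. (\<Prod>l\<in>UNIV. x l $ s l) * u k s)"

definition payoff_vec ::
  "('n::finite \<Rightarrow> 'a::finite set) \<Rightarrow> ('n \<Rightarrow> ('n \<Rightarrow> 'a) \<Rightarrow> real) \<Rightarrow> 'n \<Rightarrow> ('n \<Rightarrow> real^'a) \<Rightarrow> real^'a" where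
  "payoff_vec A u k x = (\<chi> \<alpha>. if \<alpha> \<in> A k then exp_payoff A u k (x(k := pure_strat \<alpha>)) else 0)"

definition choice_map ::
  "('n \<Rightarrow> 'a::finite set) \<Rightarrow> ('n \<Rightarrow> real^'a \<Rightarrow> real) \<Rightarrow> 'n \<Rightarrow> real^'a \<Rightarrow> real^'a" where
  "choice_map A h k y = (THE x. x \<in> mixed_strats (A k) \<and>
      (\<forall>z\<in>mixed_strats (A k). inner y z - h k z \<le> inner y x - h k x))"

fun Cn_on :: "nat \<Rightarrow> ('v::real_normed_vector) set \<Rightarrow> ('v \<Rightarrow> real) \<Rightarrow> bool" where
  "Cn_on 0 U f = continuous_on U f"
| "Cn_on (Suc n) U f = (\<exists>f'. (\<forall>x\<in>U. (f has_derivative f' x) (at x)) \<and>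
        (\<forall>v. Cn_on n U (\<lambda>x. f' x v)))"

definition smooth_on :: "('v::real_normed_vector) set \<Rightarrow> ('v \<Rightarrow> real) \<Rightarrow> bool" where
  "smooth_on U f = (open U \<and> (\<forall>n. Cn_on n U f))"

text \<open>h is C^infinity on the set S (relatively open in its affine hull): it agrees on S
  with a C^infinity function on some open neighbourhood of S.\<close>
definition smooth_on_set :: "('v::real_normed_vector) set \<Rightarrow> ('v \<Rightarrow> real) \<Rightarrow> bool" where
  "smooth_on_set S h = (\<exists>U g. S \<subseteq> U \<and> smooth_on U g \<and> (\<forall>x\<in>S. g x = h x))"

text \<open>Penalty function on X_k = mixed_strats (A k): continuous, C^infinity on the relative interior
  of each face (faces are mixed_strats B for nonempty B \<subseteq> A k), strongly convex.\<close>
definition penalty_function :: "'a::finite set \<Rightarrow> (real^'a \<Rightarrow> real) \<Rightarrow> bool" where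
  "penalty_function Ak h =
     (continuous_on (mixed_strats Ak) h \<and>
      (\<forall>B. B \<subseteq> Ak \<and> B \<noteq> {} \<longrightarrow> smooth_on_set (rel_interior (mixed_strats B)) h) \<and>
      (\<exists>K>0. \<forall>x1\<in>mixed_strats Ak. \<forall>x2\<in>mixed_strats Ak. \<forall>t\<in>{0..1}.
          h (t *\<^sub>R x1 + (1 - t) *\<^sub>R x2) \<le> t * h x1 + (1 - t) * h x2
             - 1/2 * K * t * (1 - t) * (norm (x1 - x2))\<^sup>2))"

definition dominated_within ::
  "('n::finite \<Rightarrow> 'a::finite set) \<Rightarrow> ('n \<Rightarrow> ('n \<Rightarrow> 'a) \<Rightarrow> real) \<Rightarrow> ('n \<Rightarrow> 'a set) \<Rightarrow> 'n \<Rightarrow> real^'a \<Rightarrow> real^'a \<Rightarrow> bool" where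
  "dominated_within A u S k p p' =
     (\<forall>x. (\<forall>l. l \<noteq> k \<longrightarrow> x l \<in> mixed_strats (S l)) \<longrightarrow>
          exp_payoff A u k (x(k := p)) < exp_payoff A u k (x(k := p')))"

definition dominated ::
  "('n::finite \<Rightarrow> 'a::finite set) \<Rightarrow> ('n \<Rightarrow> ('n \<Rightarrow> 'a) \<Rightarrow> real) \<Rightarrow> 'n \<Rightarrow> real^'a \<Rightarrow> bool" where
  "dominated A u k p = (\<exists>p'\<in>mixed_strats (A k). dominated_within A u A k p p')"

primrec surviving ::
  "('n::finite \<Rightarrow> 'a::finite set) \<Rightarrow> ('n \<Rightarrow> ('n \<Rightarrow> 'a) \<Rightarrow> real) \<Rightarrow> nat \<Rightarrow> 'n \<Rightarrow> 'a set" where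
  "surviving A u 0 k = A k"
| "surviving A u (Suc r) k = {\<alpha> \<in> surviving A u r k.
      \<not> (\<exists>p'\<in>mixed_strats (surviving A u r k).
            dominated_within A u (surviving A u r) k (pure_strat \<alpha>) p')}"

definition iter_dominated ::
  "('n::finite \<Rightarrow> 'a::finite set) \<Rightarrow> ('n \<Rightarrow> ('n \<Rightarrow> 'a) \<Rightarrow> real) \<Rightarrow> 'n \<Rightarrow> real^'a \<Rightarrow> bool" where
  "iter_dominated A u k p = (\<exists>r. p \<in> mixed_strats (surviving A u r k) \<and>
      (\<exists>p'\<in>mixed_strats (surviving A u r k). dominated_within A u (surviving A u r) k p p'))"

definition supp :: "real^'a::finite \<Rightarrow> 'a set" where
  "supp p = {\<alpha>. p $ \<alpha> \<noteq> 0}"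

end

theory Submission
  imports Defs
begin

text \<open>
  Suppose \<open>p'\<close> beats \<open>p\<close> against every opponent profile in \<open>\<Prod>\<^sub>l \<Delta>(S\<^sub>l)\<close> and all actions outside
  the \<open>S\<^sub>l\<close> go extinct. The advantage \<open>u\<^sub>k(p' - p; \<tau>)\<close> has a positive minimum \<open>c\<close> over the finitely
  many pure opponent profiles \<open>\<tau>\<close> in \<open>S\<close>, so by multilinearity \<open>u\<^sub>k(p' - p; x\<^sub>-\<^sub>k(t)) \<ge> c/2\<close> eventually.
  This is the derivative of \<open>\<langle>y\<^sub>k(t), p' - p\<rangle>\<close>, which therefore diverges to \<open>+\<infinity>\<close>.
  On the other hand, if every action in \<open>supp p\<close> had weight at least \<open>\<epsilon>\<close> in \<open>x\<^sub>k = Q\<^sub>k(y\<^sub>k)\<close>, then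
  \<open>x\<^sub>k + \<epsilon>(p' - p)\<close> would still be a mixed strategy, and optimality of \<open>x\<^sub>k\<close> together with
  boundedness of \<open>h\<^sub>k\<close> gives \<open>\<epsilon> \<langle>y\<^sub>k, p' - p\<rangle> \<le> 2 max |h\<^sub>k|\<close>. Hence the minimum weight on
  \<open>supp p\<close> tends to zero. Iterated dominance follows by induction on the elimination rounds,
  plain dominance being round zero.
\<close>

lemma mixed_strats_nonneg: "x \<in> mixed_strats B \<Longrightarrow> 0 \<le> x $ a"
  by (simp add: mixed_strats_def)

lemma mixed_strats_eq_0: "x \<in> mixed_strats B \<Longrightarrow> a \<notin> B \<Longrightarrow> x $ a = 0"
  by (simp add: mixed_strats_def)

lemma mixed_strats_sum_eq_1: "x \<in> mixed_strats B \<Longrightarrow> (\<Sum>a\<in>UNIV. x $ a) = 1"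
  by (simp add: mixed_strats_def)

lemma mixed_strats_le_1:
  assumes "x \<in> mixed_strats B" shows "x $ a \<le> 1"
proof -
  have "x $ a \<le> (\<Sum>a\<in>UNIV. x $ a)"
    by (rule member_le_sum) (auto simp: mixed_strats_nonneg[OF assms])
  with mixed_strats_sum_eq_1[OF assms] show ?thesis by simp
qed

lemma mixed_strats_mono: "B \<subseteq> C \<Longrightarrow> mixed_strats B \<subseteq> mixed_strats C"
  unfolding mixed_strats_def by auto

lemma pure_strat_in_mixed_strats: "a \<in> B \<Longrightarrow> pure_strat a \<in> mixed_strats B"
  unfolding mixed_strats_def pure_strat_def by auto

lemma supp_pure_strat: "supp (pure_strat a) = {a}"
  unfolding supp_def pure_strat_def by auto

lemma supp_mixed_strat_nonempty:
  assumes "x \<in> mixed_strats B" shows "supp x \<noteq> {}"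
proof
  assume "supp x = {}"
  then have "(\<Sum>a\<in>UNIV. x $ a) = 0"
    by (simp add: supp_def)
  with mixed_strats_sum_eq_1[OF assms] show False by simp
qed

lemma convex_mixed_strats: "convex (mixed_strats B)"
  unfolding convex_def mixed_strats_def
  by (auto simp: sum.distrib sum_distrib_left[symmetric])

lemma compact_mixed_strats: "compact (mixed_strats B)"
  unfolding compact_eq_bounded_closed
proof
  have "mixed_strats B \<subseteq> cbox 0 1"
    by (auto simp: mem_box_cart mixed_strats_nonneg mixed_strats_le_1)
  then show "bounded (mixed_strats B)"
    using bounded_cbox bounded_subset by blast
  have eq: "mixed_strats B = (\<Inter>a. {x. 0 \<le> x $ a}) \<inter> (\<Inter>a\<in>-B. {x. x $ a = 0})
                          \<inter> {x. (\<Sum>a\<in>UNIV. x $ a) = 1}"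
    unfolding mixed_strats_def by auto
  then show "closed (mixed_strats B)"
    by (subst eq) (intro closed_Int closed_INT ballI closed_Collect_le closed_Collect_eq continuous_intros)
qed

lemma penalty_bounded:
  assumes "penalty_function B h"
  obtains M where "\<And>z. z \<in> mixed_strats B \<Longrightarrow> \<bar>h z\<bar> \<le> M"
proof -
  have "continuous_on (mixed_strats B) h"
    using assms unfolding penalty_function_def by blast
  then have "bounded (h ` mixed_strats B)"
    by (intro compact_imp_bounded compact_continuous_image compact_mixed_strats)
  then show ?thesis
    using that unfolding bounded_iff by auto
qed

lemma regularized_argmax_unique:
  assumes "B \<noteq> {}" and "penalty_function B h"
  shows "\<exists>!x. x \<in> mixed_strats B \<and> (\<forall>z\<in>mixed_strats B. inner y z - h z \<le> inner y x - h x)"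
proof -
  let ?S = "mixed_strats B"
  let ?f = "\<lambda>z. inner y z - h z"
  obtain K where K: "K > 0" and sc: "\<And>x1 x2 t. x1 \<in> ?S \<Longrightarrow> x2 \<in> ?S \<Longrightarrow> t \<in> {0..1} \<Longrightarrow>
      h (t *\<^sub>R x1 + (1 - t) *\<^sub>R x2) \<le> t * h x1 + (1 - t) * h x2
         - 1/2 * K * t * (1 - t) * (norm (x1 - x2))\<^sup>2"
    using assms(2) unfolding penalty_function_def by blast
  have "continuous_on ?S ?f"
    using assms(2) unfolding penalty_function_def by (intro continuous_intros) auto
  moreover obtain a where "a \<in> B" using assms(1) by blast
  ultimately obtain x where x: "x \<in> ?S" "\<forall>z\<in>?S. ?f z \<le> ?f x"
    using continuous_attains_sup[OF compact_mixed_strats] pure_strat_in_mixed_strats by blast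
  have "x' = x" if x': "x' \<in> ?S" "\<forall>z\<in>?S. ?f z \<le> ?f x'" for x'
  proof (rule ccontr)
    assume "x' \<noteq> x"
    then have pos: "0 < 1/8 * K * (norm (x' - x))\<^sup>2"
      using K by simp
    let ?m = "(1/2) *\<^sub>R x' + (1/2) *\<^sub>R x"
    have "?m \<in> ?S"
      using convexD[OF convex_mixed_strats x'(1) x(1), of "1/2" "1/2"] by simp
    have "h ?m \<le> 1/2 * h x' + 1/2 * h x - 1/8 * K * (norm (x' - x))\<^sup>2"
      using sc[OF x'(1) x(1), of "1/2"] by simp
    moreover have "?f x' = ?f x"
      using x x' by (meson order_antisym)
    moreover have "inner y ?m = 1/2 * inner y x' + 1/2 * inner y x"
      by (simp add: inner_add_right)
    ultimately have "?f ?m > ?f x"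
      using pos by linarith
    with \<open>?m \<in> ?S\<close> x(2) show False by fastforce
  qed
  with x show ?thesis by blast
qed

lemma
  assumes "A k \<noteq> {}" and "penalty_function (A k) (h k)"
  shows choice_map_in_mixed_strats: "choice_map A h k y \<in> mixed_strats (A k)"
    and choice_map_maximal: "z \<in> mixed_strats (A k) \<Longrightarrow>
      inner y z - h k z \<le> inner y (choice_map A h k y) - h k (choice_map A h k y)"
  using theI'[OF regularized_argmax_unique[OF assms, of y]]
  unfolding choice_map_def by blast+

lemma choice_map_score_bound:
  assumes "A k \<noteq> {}" and "penalty_function (A k) (h k)"
    and p: "p \<in> mixed_strats (A k)" and p': "p' \<in> mixed_strats (A k)"
    and M: "\<And>z. z \<in> mixed_strats (A k) \<Longrightarrow> \<bar>h k z\<bar> \<le> M"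
    and "\<epsilon> > 0" and lb: "\<And>a. a \<in> supp p \<Longrightarrow> \<epsilon> \<le> choice_map A h k y $ a"
  shows "\<epsilon> * inner y (p' - p) \<le> 2 * M"
proof -
  let ?x = "choice_map A h k y"
  let ?z = "?x + \<epsilon> *\<^sub>R (p' - p)"
  have x: "?x \<in> mixed_strats (A k)"
    by (rule choice_map_in_mixed_strats[of A k h, OF assms(1,2)])
  have z_coord: "?z $ a = ?x $ a + \<epsilon> * p' $ a - \<epsilon> * p $ a" for a
    by (simp add: right_diff_distrib)
  have "0 \<le> ?z $ a" for a
  proof (cases "a \<in> supp p")
    case True
    then have "\<epsilon> * p $ a \<le> ?x $ a"
      using lb[of a] mixed_strats_le_1[OF p, of a] \<open>\<epsilon> > 0\<close>
      by (metis mult.right_neutral mult_left_mono order.trans less_imp_le)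
    moreover have "0 \<le> \<epsilon> * p' $ a"
      using mixed_strats_nonneg[OF p', of a] \<open>\<epsilon> > 0\<close> by simp
    ultimately show ?thesis
      unfolding z_coord by linarith
  next
    case False
    then show ?thesis
      using mixed_strats_nonneg[OF x, of a] mixed_strats_nonneg[OF p', of a] \<open>\<epsilon> > 0\<close>
      by (simp add: supp_def z_coord)
  qed
  moreover have "a \<notin> A k \<Longrightarrow> ?z $ a = 0" for a
    using mixed_strats_eq_0[OF x] mixed_strats_eq_0[OF p] mixed_strats_eq_0[OF p'] by simp
  moreover have "(\<Sum>a\<in>UNIV. ?z $ a) = 1"
    using mixed_strats_sum_eq_1[OF x] mixed_strats_sum_eq_1[OF p] mixed_strats_sum_eq_1[OF p']
    by (simp add: z_coord sum_subtractf sum.distrib sum_distrib_left[symmetric])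
  ultimately have z: "?z \<in> mixed_strats (A k)"
    by (simp add: mixed_strats_def)
  have "inner y ?z - h k ?z \<le> inner y ?x - h k ?x"
    by (rule choice_map_maximal[of A k h, OF assms(1,2) z])
  moreover have "inner y ?z = inner y ?x + \<epsilon> * inner y (p' - p)"
    by (simp add: inner_add_right)
  moreover have "\<bar>h k ?z\<bar> \<le> M" "\<bar>h k ?x\<bar> \<le> M"
    using M z x by auto
  ultimately show ?thesis by linarith
qed

lemma extinct_of_score_divergence:
  fixes y :: "real \<Rightarrow> real^'a::finite"
  assumes "A k \<noteq> {}" and "penalty_function (A k) (h k)"
    and p: "p \<in> mixed_strats (A k)" and p': "p' \<in> mixed_strats (A k)"
    and div: "filterlim (\<lambda>t. inner (y t) (p' - p)) at_top at_top"
  shows "((\<lambda>t. Min ((\<lambda>a. choice_map A h k (y t) $ a) ` supp p)) \<longlongrightarrow> 0) at_top"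
proof -
  let ?m = "\<lambda>t. Min ((\<lambda>a. choice_map A h k (y t) $ a) ` supp p)"
  have ne: "supp p \<noteq> {}"
    by (rule supp_mixed_strat_nonempty[OF p])
  obtain M where M: "\<And>z. z \<in> mixed_strats (A k) \<Longrightarrow> \<bar>h k z\<bar> \<le> M"
    using penalty_bounded[OF assms(2)] by blast
  show ?thesis
  proof (rule order_tendstoI)
    fix e :: real
    assume "e < 0"
    moreover have "0 \<le> ?m t" for t
      using ne mixed_strats_nonneg[OF choice_map_in_mixed_strats[of A k h, OF assms(1,2)]] by simp
    ultimately show "eventually (\<lambda>t. e < ?m t) at_top"
      by (simp add: less_le_trans)
  next
    fix e :: real
    assume "0 < e"
    have "eventually (\<lambda>t. 2 * M / e + 1 \<le> inner (y t) (p' - p)) at_top"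
      using div unfolding filterlim_at_top by blast
    then show "eventually (\<lambda>t. ?m t < e) at_top"
    proof (rule eventually_mono)
      fix t
      assume t: "2 * M / e + 1 \<le> inner (y t) (p' - p)"
      show "?m t < e"
      proof (rule ccontr)
        assume "\<not> ?m t < e"
        then have "\<And>a. a \<in> supp p \<Longrightarrow> e \<le> choice_map A h k (y t) $ a"
          using ne by (simp add: not_less)
        then have "e * inner (y t) (p' - p) \<le> 2 * M"
          using choice_map_score_bound[of A k h, OF assms(1-4) M \<open>0 < e\<close>] by blast
        moreover have "2 * M + e \<le> e * inner (y t) (p' - p)"
          using mult_left_mono[OF t, of e] \<open>0 < e\<close> by (simp add: distrib_left)
        ultimately show False
          using \<open>0 < e\<close> by linarith
      qed
    qed
  qed
qed

lemma filterlim_at_top_of_deriv_ge: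
  fixes f f' :: "real \<Rightarrow> real"
  assumes deriv: "\<And>t. t \<ge> T \<Longrightarrow> (f has_real_derivative f' t) (at t)"
    and "\<delta> > 0" and ge: "\<And>t. t \<ge> T \<Longrightarrow> \<delta> \<le> f' t"
  shows "filterlim f at_top at_top"
proof -
  have linear_growth: "f T + \<delta> * (t - T) \<le> f t" if "t \<ge> T" for t
  proof -
    have "f T - \<delta> * T \<le> f t - \<delta> * t"
    proof (rule DERIV_nonneg_imp_nondecreasing[OF \<open>t \<ge> T\<close>])
      fix s
      assume "T \<le> s" "s \<le> t"
      then have "((\<lambda>s. f s - \<delta> * s) has_real_derivative f' s - \<delta>) (at s)"
        by (auto intro!: derivative_eq_intros deriv)
      with ge[of s] \<open>T \<le> s\<close> show "\<exists>y. ((\<lambda>s. f s - \<delta> * s) has_real_derivative y) (at s) \<and> 0 \<le> y"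
        by force
    qed
    then show ?thesis
      by (simp add: algebra_simps)
  qed
  show ?thesis
    unfolding filterlim_at_top eventually_at_top_linorder
  proof (intro allI exI impI)
    fix Z t
    assume "max T (T + (Z - f T) / \<delta>) \<le> t"
    then have "Z - f T \<le> \<delta> * (t - T)" and "t \<ge> T"
      using \<open>\<delta> > 0\<close> by (simp_all add: field_simps)
    then show "Z \<le> f t"
      using linear_growth[of t] by linarith
  qed
qed

definition others_prob :: "('n::finite \<Rightarrow> real^'a::finite) \<Rightarrow> 'n \<Rightarrow> ('n \<Rightarrow> 'a) \<Rightarrow> real" where
  "others_prob z k s = (\<Prod>l\<in>UNIV - {k}. z l $ s l)"

lemma others_prob_fun_upd: "others_prob z k (s(k := a)) = others_prob z k s"
  unfolding others_prob_def by (rule prod.cong) auto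

lemma prod_fun_upd_eq_others_prob:
  "(\<Prod>l\<in>UNIV. (z(k := w)) l $ s l) = w $ s k * others_prob z k s"
proof -
  have "(\<Prod>l\<in>UNIV. (z(k := w)) l $ s l) = w $ s k * (\<Prod>l\<in>UNIV - {k}. (z(k := w)) l $ s l)"
    by (subst prod.remove[of _ k]) auto
  also have "(\<Prod>l\<in>UNIV - {k}. (z(k := w)) l $ s l) = others_prob z k s"
    unfolding others_prob_def by (rule prod.cong) auto
  finally show ?thesis .
qed

lemma others_prob_le:
  assumes "\<And>l. z l \<in> mixed_strats (B l)" and "l \<noteq> k"
  shows "others_prob z k s \<le> z l $ s l"
proof -
  have "others_prob z k s = z l $ s l * (\<Prod>j\<in>UNIV - {k} - {l}. z j $ s j)"
    unfolding others_prob_def using assms(2) by (intro prod.remove) auto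
  moreover have "(\<Prod>j\<in>UNIV - {k} - {l}. z j $ s j) \<le> 1"
    by (rule prod_le_1) (simp add: mixed_strats_nonneg[OF assms(1)] mixed_strats_le_1[OF assms(1)])
  ultimately show ?thesis
    using mixed_strats_nonneg[OF assms(1)] by (simp add: mult_left_le)
qed

lemma exp_payoff_fun_upd:
  "exp_payoff A u k (z(k := w)) = (\<Sum>s\<in>PiE UNIV A. w $ s k * others_prob z k s * u k s)"
  unfolding exp_payoff_def prod_fun_upd_eq_others_prob ..

lemma exp_payoff_linear:
  "exp_payoff A u k (z(k := w)) = (\<Sum>a\<in>A k. w $ a * exp_payoff A u k (z(k := pure_strat a)))"
proof -
  have "(\<Sum>a\<in>A k. w $ a * exp_payoff A u k (z(k := pure_strat a)))
      = (\<Sum>s\<in>PiE UNIV A. \<Sum>a\<in>A k. w $ a * (pure_strat a $ s k * others_prob z k s * u k s))"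
    unfolding exp_payoff_fun_upd sum_distrib_left by (rule sum.swap)
  also have "\<dots> = (\<Sum>s\<in>PiE UNIV A. w $ s k * others_prob z k s * u k s)"
  proof (rule sum.cong)
    fix s
    assume "s \<in> PiE UNIV A"
    then have "s k \<in> A k"
      by (auto simp: PiE_iff)
    have "(\<Sum>a\<in>A k. w $ a * (pure_strat a $ s k * others_prob z k s * u k s))
        = (\<Sum>a\<in>A k. if a = s k then w $ s k * others_prob z k s * u k s else 0)"
      by (rule sum.cong) (auto simp: pure_strat_def)
    with \<open>s k \<in> A k\<close> show "(\<Sum>a\<in>A k. w $ a * (pure_strat a $ s k * others_prob z k s * u k s))
             = w $ s k * others_prob z k s * u k s"
      by simp
  qed simp
  finally show ?thesis
    by (simp add: exp_payoff_fun_upd)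
qed

lemma inner_payoff_vec: "inner (payoff_vec A u k z) w = exp_payoff A u k (z(k := w))"
proof -
  have "inner (payoff_vec A u k z) w = (\<Sum>a\<in>UNIV. payoff_vec A u k z $ a * w $ a)"
    by (simp add: inner_vec_def)
  also have "\<dots> = (\<Sum>a\<in>A k. payoff_vec A u k z $ a * w $ a)"
    by (rule sum.mono_neutral_right) (simp_all add: payoff_vec_def)
  also have "\<dots> = exp_payoff A u k (z(k := w))"
    by (subst exp_payoff_linear) (simp add: payoff_vec_def mult.commute)
  finally show ?thesis .
qed

lemma exp_payoff_diff:
  "exp_payoff A u k (z(k := w')) - exp_payoff A u k (z(k := w)) = exp_payoff A u k (z(k := w' - w))"
  unfolding exp_payoff_fun_upd sum_subtractf[symmetric]
  by (rule sum.cong) (simp_all add: left_diff_distrib)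

lemma exp_payoff_pure_profile:
  assumes "s \<in> PiE UNIV A"
  shows "exp_payoff A u k (\<lambda>l. pure_strat (s l)) = u k s"
proof -
  have "(\<Prod>l\<in>UNIV. pure_strat (s l) $ s' l) * u k s' = (if s' = s then u k s else 0)" for s'
  proof (cases "s' = s")
    case False
    then obtain l where "s' l \<noteq> s l"
      by auto
    then have "pure_strat (s l) $ s' l = 0"
      by (simp add: pure_strat_def)
    with False show ?thesis
      by (simp add: prod_zero_iff[of UNIV, OF finite] exI[of _ l])
  qed (simp add: pure_strat_def)
  with assms show ?thesis
    by (simp add: exp_payoff_def)
qed

lemma fun_upd_in_PiE:
  assumes "\<tau> \<in> PiE (UNIV - {k}) S" and "\<And>l. S l \<subseteq> A l" and "a \<in> A k"
  shows "\<tau>(k := a) \<in> PiE UNIV A"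
proof -
  have "\<forall>l. (\<tau>(k := a)) l \<in> A l"
    using assms(1) assms(2)[THEN subsetD] assms(3) by (auto simp: PiE_iff)
  then show ?thesis
    by (simp add: PiE_iff)
qed

lemma bij_betw_fun_upd_PiE:
  assumes SA: "\<And>l. S l \<subseteq> A l"
  shows "bij_betw (\<lambda>p. (fst p)(k := snd p)) (PiE (UNIV - {k}) S \<times> A k)
           {s \<in> PiE UNIV A. \<forall>l\<noteq>k. s l \<in> S l}"
proof (rule bij_betwI[where g = "\<lambda>s. (s(k := undefined), s k)"])
  show "(\<lambda>p. (fst p)(k := snd p)) \<in> PiE (UNIV - {k}) S \<times> A k \<rightarrow> {s \<in> PiE UNIV A. \<forall>l\<noteq>k. s l \<in> S l}"
  proof (rule Pi_I)
    fix p
    assume "p \<in> PiE (UNIV - {k}) S \<times> A k"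
    then have \<tau>: "fst p \<in> PiE (UNIV - {k}) S" and a: "snd p \<in> A k"
      by (simp_all add: mem_Times_iff)
    then have "\<forall>l\<noteq>k. fst p l \<in> S l"
      by (simp add: PiE_mem)
    with fun_upd_in_PiE[OF \<tau> SA a]
    show "(fst p)(k := snd p) \<in> {s \<in> PiE UNIV A. \<forall>l\<noteq>k. s l \<in> S l}"
      by simp
  qed
  show "(\<lambda>s. (s(k := undefined), s k)) \<in> {s \<in> PiE UNIV A. \<forall>l\<noteq>k. s l \<in> S l} \<rightarrow> PiE (UNIV - {k}) S \<times> A k"
  proof (rule Pi_I)
    fix s
    assume s: "s \<in> {s \<in> PiE UNIV A. \<forall>l\<noteq>k. s l \<in> S l}"
    then have "s(k := undefined) \<in> PiE (UNIV - {k}) S"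
      by (intro PiE_I) auto
    moreover have "s k \<in> A k"
      using s PiE_mem[of s UNIV A k] by simp
    ultimately show "(s(k := undefined), s k) \<in> PiE (UNIV - {k}) S \<times> A k"
      by simp
  qed
  show "((fst p)(k := snd p, k := undefined), ((fst p)(k := snd p)) k) = p"
    if "p \<in> PiE (UNIV - {k}) S \<times> A k" for p
  proof -
    have "fst p \<in> PiE (UNIV - {k}) S"
      using that by (simp add: mem_Times_iff)
    then have "fst p k = undefined"
      by (rule PiE_arb) simp
    then show ?thesis
      by (simp add: fun_upd_idem)
  qed
  show "(fst (s(k := undefined), s k))(k := snd (s(k := undefined), s k)) = s"
    if "s \<in> {s \<in> PiE UNIV A. \<forall>l\<noteq>k. s l \<in> S l}" for s
    by simp
qed

lemma exp_payoff_split: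
  assumes SA: "\<And>l. S l \<subseteq> A l"
  shows "exp_payoff A u k (z(k := w)) =
      (\<Sum>\<tau>\<in>PiE (UNIV - {k}) S. others_prob z k \<tau> * (\<Sum>a\<in>A k. w $ a * u k (\<tau>(k := a))))
    + (\<Sum>s\<in>{s \<in> PiE UNIV A. \<exists>l\<noteq>k. s l \<notin> S l}. w $ s k * others_prob z k s * u k s)"
proof -
  let ?g = "\<lambda>s. w $ s k * others_prob z k s * u k s"
  let ?inside = "{s \<in> PiE UNIV A. \<forall>l\<noteq>k. s l \<in> S l}"
  let ?outside = "{s \<in> PiE UNIV A. \<exists>l\<noteq>k. s l \<notin> S l}"
  have "sum ?g ?inside = (\<Sum>p\<in>PiE (UNIV - {k}) S \<times> A k. ?g ((fst p)(k := snd p)))"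
    by (rule sum.reindex_bij_betw[OF bij_betw_fun_upd_PiE[of S A k, OF SA], symmetric])
  also have "\<dots> = (\<Sum>\<tau>\<in>PiE (UNIV - {k}) S. \<Sum>a\<in>A k. ?g (\<tau>(k := a)))"
    by (simp add: sum.cartesian_product case_prod_beta)
  also have "\<dots> = (\<Sum>\<tau>\<in>PiE (UNIV - {k}) S. others_prob z k \<tau> * (\<Sum>a\<in>A k. w $ a * u k (\<tau>(k := a))))"
    by (simp add: others_prob_fun_upd sum_distrib_left mult_ac)
  finally have inside: "sum ?g ?inside = \<dots>" .
  have "sum ?g (PiE UNIV A) = sum ?g (?inside \<union> ?outside)"
    by (rule arg_cong[where f = "sum ?g"]) blast
  also have "\<dots> = sum ?g ?inside + sum ?g ?outside"
    by (rule sum.union_disjoint) auto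
  finally have "sum ?g (PiE UNIV A) = sum ?g ?inside + sum ?g ?outside" .
  with inside show ?thesis
    by (simp add: exp_payoff_fun_upd)
qed

lemma sum_others_prob:
  "(\<Sum>\<tau>\<in>PiE (UNIV - {k}) S. others_prob z k \<tau>) = (\<Prod>l\<in>UNIV - {k}. \<Sum>a\<in>S l. z l $ a)"
  by (simp add: others_prob_def prod_sum_PiE)

lemma exp_payoff_lower_bound:
  assumes SA: "\<And>l. S l \<subseteq> A l" and nonneg: "\<And>l a. 0 \<le> z l $ a"
    and c: "\<And>\<tau>. \<tau> \<in> PiE (UNIV - {k}) S \<Longrightarrow> c \<le> (\<Sum>a\<in>A k. w $ a * u k (\<tau>(k := a)))"
  shows "c * (\<Prod>l\<in>UNIV - {k}. \<Sum>a\<in>S l. z l $ a)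
      + (\<Sum>s\<in>{s \<in> PiE UNIV A. \<exists>l\<noteq>k. s l \<notin> S l}. w $ s k * others_prob z k s * u k s)
    \<le> exp_payoff A u k (z(k := w))"
proof -
  have "c * (\<Prod>l\<in>UNIV - {k}. \<Sum>a\<in>S l. z l $ a) = (\<Sum>\<tau>\<in>PiE (UNIV - {k}) S. others_prob z k \<tau> * c)"
    by (simp add: sum_others_prob[symmetric] sum_distrib_left mult.commute)
  also have "\<dots> \<le> (\<Sum>\<tau>\<in>PiE (UNIV - {k}) S. others_prob z k \<tau> * (\<Sum>a\<in>A k. w $ a * u k (\<tau>(k := a))))"
    by (intro sum_mono mult_left_mono c) (auto simp: others_prob_def nonneg prod_nonneg)
  finally show ?thesis
    by (simp add: exp_payoff_split[OF SA])
qed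

lemma dominated_within_pure_advantage:
  assumes SA: "\<And>l. S l \<subseteq> A l" and dom: "dominated_within A u S k p p'"
    and \<tau>: "\<tau> \<in> PiE (UNIV - {k}) S"
  shows "0 < (\<Sum>a\<in>A k. (p' - p) $ a * u k (\<tau>(k := a)))"
proof -
  define z where "z l = pure_strat (\<tau> l)" for l
  have "\<forall>l. l \<noteq> k \<longrightarrow> z l \<in> mixed_strats (S l)"
    using \<tau> by (auto simp: z_def PiE_iff pure_strat_in_mixed_strats)
  then have "exp_payoff A u k (z(k := p)) < exp_payoff A u k (z(k := p'))"
    using dom unfolding dominated_within_def by blast
  then have "0 < exp_payoff A u k (z(k := p' - p))"
    using exp_payoff_diff[of A u k z p' p] by linarith
  moreover have "exp_payoff A u k (z(k := pure_strat a)) = u k (\<tau>(k := a))" if "a \<in> A k" for a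
  proof -
    have "\<tau>(k := a) \<in> PiE UNIV A"
      by (rule fun_upd_in_PiE[OF \<tau> SA that])
    moreover have "z(k := pure_strat a) = (\<lambda>l. pure_strat ((\<tau>(k := a)) l))"
      by (simp add: z_def fun_eq_iff)
    ultimately show ?thesis
      by (metis exp_payoff_pure_profile)
  qed
  then have "exp_payoff A u k (z(k := p' - p)) = (\<Sum>a\<in>A k. (p' - p) $ a * u k (\<tau>(k := a)))"
    by (simp add: exp_payoff_linear[of A u k z "p' - p"])
  ultimately show ?thesis
    by simp
qed

lemma surviving_subset: "surviving A u r l \<subseteq> A l"
  by (induction r) auto

lemma dominated_imp_iter_dominated:
  assumes "p \<in> mixed_strats (A k)" and "dominated A u k p"
  shows "iter_dominated A u k p"
proof -
  have "surviving A u 0 = A"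
    by (simp add: fun_eq_iff)
  with assms show ?thesis
    unfolding dominated_def iter_dominated_def by (intro exI[of _ 0]) simp
qed

locale regularized_learning =
  fixes A :: "'n::finite \<Rightarrow> 'a::finite set" and u :: "'n \<Rightarrow> ('n \<Rightarrow> 'a) \<Rightarrow> real"
    and h :: "'n \<Rightarrow> real^'a \<Rightarrow> real" and y :: "real \<Rightarrow> 'n \<Rightarrow> real^'a"
  assumes nonempty: "\<And>l. A l \<noteq> {}"
    and penalty: "\<And>l. penalty_function (A l) (h l)"
    and ode: "\<And>t l. t \<ge> 0 \<Longrightarrow>
       ((\<lambda>s. y s l) has_vector_derivative
          payoff_vec A u l (\<lambda>j. choice_map A h j (y t j))) (at t within {0..})"
begin

definition play :: "real \<Rightarrow> 'n \<Rightarrow> real^'a" where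
  "play t j = choice_map A h j (y t j)"

lemma play_in_mixed_strats: "play t l \<in> mixed_strats (A l)"
  unfolding play_def by (rule choice_map_in_mixed_strats[of A l h, OF nonempty penalty])

lemma has_real_derivative_score:
  assumes "t > 0"
  shows "((\<lambda>s. inner (y s k) w) has_real_derivative exp_payoff A u k ((play t)(k := w))) (at t)"
proof -
  have "at t within {0..} = at t"
    using assms by (intro at_within_interior) simp
  then have "((\<lambda>s. y s k) has_vector_derivative payoff_vec A u k (play t)) (at t)"
    using ode[of t k] assms by (simp add: play_def[abs_def])
  then have "((\<lambda>s. inner (y s k) w) has_real_derivative inner (payoff_vec A u k (play t)) w) (at t)"
    unfolding has_vector_derivative_def has_field_derivative_def
    by (auto intro!: derivative_eq_intros)
  then show ?thesis
    by (simp add: inner_payoff_vec)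
qed

lemma mass_tendsto_1:
  assumes "\<And>a. a \<notin> S \<Longrightarrow> ((\<lambda>t. play t l $ a) \<longlongrightarrow> 0) at_top"
  shows "((\<lambda>t. \<Sum>a\<in>S. play t l $ a) \<longlongrightarrow> 1) at_top"
proof -
  have "(\<Sum>a\<in>S. play t l $ a) = 1 - (\<Sum>a\<in>-S. play t l $ a)" for t
    using sum.subset_diff[of S UNIV "\<lambda>a. play t l $ a"] mixed_strats_sum_eq_1[OF play_in_mixed_strats]
    by (simp add: Compl_eq_Diff_UNIV)
  moreover have "((\<lambda>t. 1 - (\<Sum>a\<in>-S. play t l $ a)) \<longlongrightarrow> 1 - 0) at_top"
    using assms by (intro tendsto_diff tendsto_const tendsto_null_sum) auto
  ultimately show ?thesis
    by simp
qed

lemma others_prob_tendsto_0: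
  assumes "l \<noteq> k" and "((\<lambda>t. play t l $ s l) \<longlongrightarrow> 0) at_top"
  shows "((\<lambda>t. others_prob (play t) k s) \<longlongrightarrow> 0) at_top"
proof (rule tendsto_sandwich[OF _ _ tendsto_const assms(2)])
  show "eventually (\<lambda>t. 0 \<le> others_prob (play t) k s) at_top"
    by (simp add: others_prob_def prod_nonneg mixed_strats_nonneg[OF play_in_mixed_strats])
  show "eventually (\<lambda>t. others_prob (play t) k s \<le> play t l $ s l) at_top"
  proof (rule always_eventually, rule allI)
    fix t
    show "others_prob (play t) k s \<le> play t l $ s l"
      by (rule others_prob_le[where B = A]) (simp_all add: play_in_mixed_strats assms(1))
  qed
qed

lemma payoff_advantage_eventually_pos:
  assumes SA: "\<And>l. S l \<subseteq> A l"
    and extinct: "\<And>l a. a \<notin> S l \<Longrightarrow> ((\<lambda>t. play t l $ a) \<longlongrightarrow> 0) at_top"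
    and dom: "dominated_within A u S k p p'"
  obtains c where "c > 0" and "eventually (\<lambda>t. c \<le> exp_payoff A u k ((play t)(k := p' - p))) at_top"
proof -
  define adv where "adv \<tau> = (\<Sum>a\<in>A k. (p' - p) $ a * u k (\<tau>(k := a)))" for \<tau>
  define outside where "outside z = (\<Sum>s\<in>{s \<in> PiE UNIV A. \<exists>l\<noteq>k. s l \<notin> S l}.
      (p' - p) $ s k * others_prob z k s * u k s)" for z
  \<comment> \<open>inserting \<open>1\<close> keeps the minimum well defined when no opponent profile lies in \<open>S\<close>\<close>
  define c where "c = Min (insert 1 (adv ` PiE (UNIV - {k}) S))"
  have "c > 0"
    using dominated_within_pure_advantage[OF SA dom] by (simp add: c_def adv_def)
  have c_le: "c \<le> adv \<tau>" if "\<tau> \<in> PiE (UNIV - {k}) S" for \<tau>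
    using that by (simp add: c_def)
  have bound: "c * (\<Prod>l\<in>UNIV - {k}. \<Sum>a\<in>S l. play t l $ a) + outside (play t)
      \<le> exp_payoff A u k ((play t)(k := p' - p))" for t
    unfolding outside_def
    by (rule exp_payoff_lower_bound[OF SA mixed_strats_nonneg[OF play_in_mixed_strats]])
      (use c_le in \<open>simp add: adv_def\<close>)
  have "((\<lambda>t. \<Prod>l\<in>UNIV - {k}. \<Sum>a\<in>S l. play t l $ a) \<longlongrightarrow> (\<Prod>l\<in>UNIV - {k}. 1)) at_top"
    by (intro tendsto_prod mass_tendsto_1 extinct)
  moreover have "((\<lambda>t. outside (play t)) \<longlongrightarrow> 0) at_top"
    unfolding outside_def
  proof (rule tendsto_null_sum)
    fix s
    assume "s \<in> {s \<in> PiE UNIV A. \<exists>l\<noteq>k. s l \<notin> S l}"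
    then obtain l where "l \<noteq> k" and "s l \<notin> S l"
      by blast
    then have "((\<lambda>t. others_prob (play t) k s) \<longlongrightarrow> 0) at_top"
      using extinct by (intro others_prob_tendsto_0)
    then show "((\<lambda>t. (p' - p) $ s k * others_prob (play t) k s * u k s) \<longlongrightarrow> 0) at_top"
      by (intro tendsto_mult_left_zero tendsto_mult_right_zero)
  qed
  ultimately have "((\<lambda>t. c * (\<Prod>l\<in>UNIV - {k}. \<Sum>a\<in>S l. play t l $ a) + outside (play t))
      \<longlongrightarrow> c * 1 + 0) at_top"
    by (intro tendsto_intros) auto
  then have "eventually (\<lambda>t. c / 2 < c * (\<Prod>l\<in>UNIV - {k}. \<Sum>a\<in>S l. play t l $ a) + outside (play t)) at_top"
    using \<open>c > 0\<close> by (intro order_tendstoD(1)) auto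
  then have "eventually (\<lambda>t. c / 2 \<le> exp_payoff A u k ((play t)(k := p' - p))) at_top"
    by (rule eventually_mono) (rule less_imp_le[OF less_le_trans[OF _ bound]])
  with \<open>c > 0\<close> show ?thesis
    using that[of "c / 2"] by simp
qed

lemma extinct_of_dominated_within:
  assumes SA: "\<And>l. S l \<subseteq> A l"
    and extinct: "\<And>l a. a \<notin> S l \<Longrightarrow> ((\<lambda>t. play t l $ a) \<longlongrightarrow> 0) at_top"
    and p: "p \<in> mixed_strats (A k)" and p': "p' \<in> mixed_strats (A k)"
    and dom: "dominated_within A u S k p p'"
  shows "((\<lambda>t. Min ((\<lambda>a. play t k $ a) ` supp p)) \<longlongrightarrow> 0) at_top"
proof -
  obtain c T where "c > 0" and c: "\<And>t. t \<ge> T \<Longrightarrow> c \<le> exp_payoff A u k ((play t)(k := p' - p))"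
    using payoff_advantage_eventually_pos[OF SA extinct dom] unfolding eventually_at_top_linorder
    by metis
  have "filterlim (\<lambda>t. inner (y t k) (p' - p)) at_top at_top"
    by (rule filterlim_at_top_of_deriv_ge[of "max T 1", OF has_real_derivative_score \<open>c > 0\<close> c])
      auto
  then show ?thesis
    unfolding play_def
    by (rule extinct_of_score_divergence[of A k h, OF nonempty penalty p p'])
qed

lemma surviving_extinct:
  "a \<notin> surviving A u r l \<Longrightarrow> ((\<lambda>t. play t l $ a) \<longlongrightarrow> 0) at_top"
proof (induction r arbitrary: l a)
  case 0
  then show ?case
    by (simp add: mixed_strats_eq_0[OF play_in_mixed_strats])
next
  case (Suc r)
  show ?case
  proof (cases "a \<in> surviving A u r l")
    case True
    with Suc.prems obtain p' where p': "p' \<in> mixed_strats (surviving A u r l)"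
      and dom: "dominated_within A u (surviving A u r) l (pure_strat a) p'"
      by auto
    have "pure_strat a \<in> mixed_strats (A l)"
      using True surviving_subset by (blast intro: pure_strat_in_mixed_strats)
    moreover have "p' \<in> mixed_strats (A l)"
      using p' mixed_strats_mono[OF surviving_subset] by blast
    ultimately show ?thesis
      using extinct_of_dominated_within[OF surviving_subset Suc.IH _ _ dom]
      by (simp add: supp_pure_strat)
  qed (rule Suc.IH)
qed

lemma extinct_of_iter_dominated:
  assumes "iter_dominated A u k p"
  shows "((\<lambda>t. Min ((\<lambda>a. play t k $ a) ` supp p)) \<longlongrightarrow> 0) at_top"
proof -
  obtain r p' where p: "p \<in> mixed_strats (surviving A u r k)"
    and p': "p' \<in> mixed_strats (surviving A u r k)"
    and dom: "dominated_within A u (surviving A u r) k p p'"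
    using assms unfolding iter_dominated_def by blast
  show ?thesis
    using surviving_subset[of A u r] surviving_extinct[of _ r]
      mixed_strats_mono[OF surviving_subset, THEN subsetD, OF p]
      mixed_strats_mono[OF surviving_subset, THEN subsetD, OF p'] dom
    by (rule extinct_of_dominated_within)
qed

end

theorem theorem4p1:
  fixes A :: "'n::finite \<Rightarrow> 'a::finite set"
    and u :: "'n \<Rightarrow> ('n \<Rightarrow> 'a) \<Rightarrow> real"
    and h :: "'n \<Rightarrow> real^'a \<Rightarrow> real"
    and y :: "real \<Rightarrow> 'n \<Rightarrow> real^'a"
    and k :: 'n and p :: "real^'a"
  assumes nonempty: "\<And>l. A l \<noteq> {}"
    and penalty: "\<And>l. penalty_function (A l) (h l)"
    and ode: "\<And>t l. t \<ge> 0 \<Longrightarrow>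
       ((\<lambda>s. y s l) has_vector_derivative
          payoff_vec A u l (\<lambda>j. choice_map A h j (y t j))) (at t within {0..})"
    and p_strat: "p \<in> mixed_strats (A k)"
    and dom: "dominated A u k p \<or> iter_dominated A u k p"
  shows "((\<lambda>t. Min ((\<lambda>\<alpha>. choice_map A h k (y t k) $ \<alpha>) ` supp p)) \<longlongrightarrow> 0) at_top"
proof -
  interpret regularized_learning A u h y
    using nonempty penalty ode by unfold_locales
  have "iter_dominated A u k p"
    using dom p_strat by (blast intro: dominated_imp_iter_dominated)
  then show ?thesis
    using extinct_of_iter_dominated by (simp add: play_def)
qed

end
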